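(* Let $n\ge 4$ be an integer not divisible by $3$. Then the prism $D_n=C_n\Box P_2$ (on $2n$ vertices) is $\mathbb{Z}_{2n}$-distance antimagic.
   Context: $C_n$ is the cycle of length $n$, $P_2$ the path with two vertices ($K_2$), and $\Box$ the Cartesian product: $V(G\Box H)=V(G)\times V(H)$, with $(x,u)\sim(y,v)$ iff ($x=y$ and $uv\in E(H)$) or ($u=v$ and $xy\in E(G)$). $\mathbb{Z}_m$ is the cyclic group of integers modulo $m$. For a graph $G$ with $N$ vertices and an Abelian group $A$ of order $N$, and a bijection $f:V(G)\to A$, the weight of $x$ is $w_f(x)=\sum_{y\in N(x)} f(y)$ computed in $A$ ($N(x)$ the open neighbourhood). $f$ is an $A$-distance antimagic labelling if all weights are pairwise distinct; $G$ is $A$-distance antimagic if it admits such a labelling. *)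

theory Defs
  imports Main
begin

definition cycle_adj :: "nat \<Rightarrow> nat \<Rightarrow> nat \<Rightarrow> bool" where
  "cycle_adj n i j \<longleftrightarrow> i < n \<and> j < n \<and> i \<noteq> j \<and> (j = (i + 1) mod n \<or> i = (j + 1) mod n)"

definition P2_adj :: "nat \<Rightarrow> nat \<Rightarrow> bool" where
  "P2_adj u v \<longleftrightarrow> u < 2 \<and> v < 2 \<and> u \<noteq> v"

definition cart_adj :: "('a \<Rightarrow> 'a \<Rightarrow> bool) \<Rightarrow> ('b \<Rightarrow> 'b \<Rightarrow> bool) \<Rightarrow> 'a \<times> 'b \<Rightarrow> 'a \<times> 'b \<Rightarrow> bool" where
  "cart_adj G H p q \<longleftrightarrow> (fst p = fst q \<and> H (snd p) (snd q)) \<or> (snd p = snd q \<and> G (fst p) (fst q))"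

definition prism_vertices :: "nat \<Rightarrow> (nat \<times> nat) set" where
  "prism_vertices n = {0..<n} \<times> {0..<2}"

definition prism_adj :: "nat \<Rightarrow> nat \<times> nat \<Rightarrow> nat \<times> nat \<Rightarrow> bool" where
  "prism_adj n = cart_adj (cycle_adj n) P2_adj"

definition nbhd :: "'v set \<Rightarrow> ('v \<Rightarrow> 'v \<Rightarrow> bool) \<Rightarrow> 'v \<Rightarrow> 'v set" where
  "nbhd V adj x = {y \<in> V. adj x y}"

(* Z_m is modelled as {0..<m} with addition modulo m; the weight computed in Z_m is
   the natural-number sum reduced mod m. *)
definition Zm_weight :: "nat \<Rightarrow> 'v set \<Rightarrow> ('v \<Rightarrow> 'v \<Rightarrow> bool) \<Rightarrow> ('v \<Rightarrow> nat) \<Rightarrow> 'v \<Rightarrow> nat" where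
  "Zm_weight m V adj f x = (\<Sum>y\<in>nbhd V adj x. f y) mod m"

definition Zm_distance_antimagic_labelling ::
  "nat \<Rightarrow> 'v set \<Rightarrow> ('v \<Rightarrow> 'v \<Rightarrow> bool) \<Rightarrow> ('v \<Rightarrow> nat) \<Rightarrow> bool" where
  "Zm_distance_antimagic_labelling m V adj f \<longleftrightarrow>
     bij_betw f V {0..<m} \<and> inj_on (Zm_weight m V adj f) V"

definition Zm_distance_antimagic :: "nat \<Rightarrow> 'v set \<Rightarrow> ('v \<Rightarrow> 'v \<Rightarrow> bool) \<Rightarrow> bool" where
  "Zm_distance_antimagic m V adj \<longleftrightarrow> (\<exists>f. Zm_distance_antimagic_labelling m V adj f)"

end

theory Submission
  imports Defs "HOL-Number_Theory.Cong"
begin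

text \<open>
  Label the vertex \<open>(i, b)\<close> of the prism by \<open>2 i + b\<close>. The neighbours of \<open>(i, b)\<close> are
  \<open>(i \<plusminus> 1, b)\<close> and \<open>(i, 1 - b)\<close>, so its weight is \<open>6 i + b + 1\<close> modulo \<open>2 n\<close>.
  Since the modulus is even, the parity of the weight recovers \<open>b\<close>; the rest recovers
  \<open>3 i\<close> modulo \<open>n\<close>, and hence \<open>i\<close> because \<open>3\<close> is invertible modulo \<open>n\<close>.
\<close>

definition prism_label :: "nat \<times> nat \<Rightarrow> nat" where
  "prism_label = (\<lambda>(i, b). 2 * i + b)"

lemma succ_mod: "i < n \<Longrightarrow> (i + 1) mod n = (if i = n - 1 then 0 else i + 1)"
  for i n :: nat
  by (cases "i = n - 1") auto

lemma pred_mod: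
  fixes i n :: nat
  assumes "i < n"
  shows "(i + n - 1) mod n = (if i = 0 then n - 1 else i - 1)"
proof (cases i)
  case (Suc k)
  then have "i + n - 1 = k + n"
    by simp
  with Suc assms show ?thesis
    by simp
qed (use assms in simp)

lemma cycle_adj_iff:
  assumes "i < n" "j < n" "n \<ge> 2"
  shows "cycle_adj n i j \<longleftrightarrow> j = (i + 1) mod n \<or> j = (i + n - 1) mod n"
  using assms unfolding cycle_adj_def succ_mod[OF assms(1)] succ_mod[OF assms(2)] pred_mod[OF assms(1)]
  by auto

lemma prism_nbhd:
  assumes "i < n" "b < 2" "n \<ge> 2"
  shows "nbhd (prism_vertices n) (prism_adj n) (i, b) =
           {((i + 1) mod n, b), ((i + n - 1) mod n, b), (i, 1 - b)}"
proof -
  have "P2_adj b c \<longleftrightarrow> c = 1 - b" if "c < 2" for c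
    using assms(2) that unfolding P2_adj_def by (auto simp: less_2_cases_iff)
  moreover have "(i + 1) mod n < n" "(i + n - 1) mod n < n"
    using assms by auto
  ultimately show ?thesis
    using assms cycle_adj_iff[OF assms(1) _ assms(3)]
    unfolding nbhd_def prism_vertices_def prism_adj_def cart_adj_def
    by auto
qed

lemma bij_betw_prism_label: "bij_betw prism_label (prism_vertices n) {0..<2 * n}"
proof (rule bij_betw_imageI)
  show "inj_on prism_label (prism_vertices n)"
    unfolding inj_on_def prism_label_def prism_vertices_def by auto presburger
  have "k \<in> prism_label ` prism_vertices n" if "k < 2 * n" for k
  proof
    show "k = prism_label (k div 2, k mod 2)"
      unfolding prism_label_def by simp
    show "(k div 2, k mod 2) \<in> prism_vertices n"
      using that unfolding prism_vertices_def by auto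
  qed
  then show "prism_label ` prism_vertices n = {0..<2 * n}"
    unfolding prism_label_def prism_vertices_def by auto
qed

lemma prism_weight_prism_label:
  assumes "i < n" "b < 2" "n \<ge> 3"
  shows "Zm_weight (2 * n) (prism_vertices n) (prism_adj n) prism_label (i, b)
           = (6 * i + b + 1) mod (2 * n)"
proof -
  let ?succ = "(i + 1) mod n" and ?pred = "(i + n - 1) mod n"
  have "?succ \<noteq> ?pred" "i \<noteq> ?succ" "i \<noteq> ?pred"
    using assms unfolding succ_mod[OF assms(1)] pred_mod[OF assms(1)] by auto
  moreover have "nbhd (prism_vertices n) (prism_adj n) (i, b) = {(?succ, b), (?pred, b), (i, 1 - b)}"
    using assms by (intro prism_nbhd) auto
  ultimately have sum: "(\<Sum>v\<in>nbhd (prism_vertices n) (prism_adj n) (i, b). prism_label v)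
                          = 2 * ?succ + 2 * ?pred + 2 * i + b + 1"
    using assms(2) by (simp add: prism_label_def)
  have "[2 * ?succ = 2 * (i + 1)] (mod 2 * n)" "[2 * ?pred = 2 * (i + n - 1)] (mod 2 * n)"
    by (intro cong_cmult_leftI, simp add: cong_def)+
  then have "[2 * ?succ + 2 * ?pred + 2 * i + b + 1
              = 2 * (i + 1) + 2 * (i + n - 1) + 2 * i + b + 1] (mod 2 * n)"
    by (intro cong_add cong_refl)
  also have "2 * (i + 1) + 2 * (i + n - 1) + 2 * i + b + 1 = (6 * i + b + 1) + 2 * n"
    using assms by simp
  also have "[\<dots> = 6 * i + b + 1] (mod 2 * n)"
    unfolding cong_def by (rule mod_add_self2)
  finally show ?thesis
    unfolding Zm_weight_def sum cong_def .
qed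

lemma prism_weight_formula_eq_imp_eq:
  fixes n i j b c :: nat
  assumes "coprime 3 n" "i < n" "j < n" "b < 2" "c < 2"
    and eq: "(6 * i + b + 1) mod (2 * n) = (6 * j + c + 1) mod (2 * n)"
  shows "(i, b) = (j, c)"
proof -
  have "even (6 * i + b + 1) \<longleftrightarrow> even (6 * j + c + 1)"
    using arg_cong[OF eq, of even] by (simp add: dvd_mod_iff)
  with assms(4,5) have "b = c"
    by (auto simp: less_2_cases_iff)
  with eq have "[6 * i + (b + 1) = 6 * j + (b + 1)] (mod 2 * n)"
    unfolding cong_def by (simp add: add.assoc)
  then have "[6 * i = 6 * j] (mod 2 * n)"
    by (simp only: cong_add_rcancel_nat)
  then have "[3 * i = 3 * j] (mod n)"
    using mult_mod_right[of 2 "3 * i" n] mult_mod_right[of 2 "3 * j" n]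
    unfolding cong_def by simp
  then have "[i = j] (mod n)"
    using cong_mult_lcancel_nat[OF assms(1)] by simp
  with assms(2,3) \<open>b = c\<close> show ?thesis
    unfolding cong_def by simp
qed

theorem mainTheorem10:
  fixes n :: nat
  assumes "n \<ge> 4" and "\<not> 3 dvd n"
  shows "Zm_distance_antimagic (2 * n) (prism_vertices n) (prism_adj n)"
proof -
  have "coprime 3 n"
    using assms(2) by (intro prime_imp_coprime) auto
  have "inj_on (Zm_weight (2 * n) (prism_vertices n) (prism_adj n) prism_label)
          (prism_vertices n)"
  proof (rule inj_onI)
    fix p q
    assume p: "p \<in> prism_vertices n" and q: "q \<in> prism_vertices n"
      and weight_eq: "Zm_weight (2 * n) (prism_vertices n) (prism_adj n) prism_label p
                    = Zm_weight (2 * n) (prism_vertices n) (prism_adj n) prism_label q"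
    from p q obtain i b j c where pq: "p = (i, b)" "q = (j, c)"
      and bounds: "i < n" "j < n" "b < 2" "c < 2"
      unfolding prism_vertices_def by auto
    with weight_eq assms(1) have "(6 * i + b + 1) mod (2 * n) = (6 * j + c + 1) mod (2 * n)"
      by (simp add: prism_weight_prism_label)
    with \<open>coprime 3 n\<close> bounds show "p = q"
      unfolding pq by (rule prism_weight_formula_eq_imp_eq)
  qed
  then show ?thesis
    unfolding Zm_distance_antimagic_def Zm_distance_antimagic_labelling_def
    using bij_betw_prism_label by blast
qed

end
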